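(* Let $\epsilon\in\mathbb C\setminus\{0\}$, $\eta_1(x,y;z)=(1-xz)^{-\epsilon}e^{yz}=\sum_{k\ge0}F_1^k(x,y)z^k$, so $F^k_1(x,y)=\sum_{i+j=k}\frac{(\epsilon)_i}{i!\,j!}x^iy^j$ with $(\epsilon)_i=\epsilon(\epsilon+1)\cdots(\epsilon+i-1)$. Then: (a) $x\frac{\partial^2\eta_1}{\partial x\partial y}=\frac{\partial\eta_1}{\partial x}-\epsilon\frac{\partial\eta_1}{\partial y}$, and $\frac{\partial F_1^{k+1}}{\partial y}=F_1^k$, $\frac1\epsilon\frac{\partial F_1^{k+1}}{\partial x}=\sum_{i+j=k}x^iF_1^j$ for all $k\ge0$. (b) Let $m\ge1$, $\Phi_1(\mathbf t;x,y)=\sum_{k=0}^m t_kF_1^{k+1}(x,y)$, and let $(u_1(\mathbf t),u_2(\mathbf t))$ be a $C^1$ map with $\partial_x\Phi_1=\partial_y\Phi_1=0$ at $(x,y)=(u_1,u_2)$, such that at this point $u_1\neq0$, $\partial_x^2\Phi_1\neq0$ and $\partial_y^2\Phi_1\neq0$. Then for $k=1,\dots,m$, \[ \frac{\partial u_1}{\partial t_k}=\lambda_1^k\frac{\partial u_1}{\partial t_0},\qquad \frac{\partial u_2}{\partial t_k}=\lambda_2^k\frac{\partial u_2}{\partial t_0}, \qquad \lambda_1^k=\sum_{i+j=k}u_1^iF_1^j(u_1,u_2),\quad \lambda_2^k=F_1^k(u_1,u_2). \] In particular for $k=1$: $\lambda_1^1=(1+\epsilon)u_1+u_2$, $\lambda_2^1=\epsilon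 u_1+u_2$. *)

theory Defs
  imports "HOL-Analysis.Analysis"
begin

definition F1 :: "complex \<Rightarrow> nat \<Rightarrow> complex \<Rightarrow> complex \<Rightarrow> complex" where
  "F1 eps k x y = (\<Sum>i\<le>k. pochhammer eps i / (fact i * fact (k - i)) * x ^ i * y ^ (k - i))"

definition eta1 :: "complex \<Rightarrow> complex \<Rightarrow> complex \<Rightarrow> complex \<Rightarrow> complex" where
  "eta1 eps x y z = (1 - x * z) powr (- eps) * exp (y * z)"

definition Phi1 :: "complex \<Rightarrow> nat \<Rightarrow> (nat \<Rightarrow> complex) \<Rightarrow> complex \<Rightarrow> complex \<Rightarrow> complex" where
  "Phi1 eps m t x y = (\<Sum>k\<le>m. t k * F1 eps (k + 1) x y)"

definition dx :: "(complex \<Rightarrow> complex \<Rightarrow> complex) \<Rightarrow> complex \<Rightarrow> complex \<Rightarrow> complex" where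
  "dx f x y = deriv (\<lambda>x'. f x' y) x"

definition dy :: "(complex \<Rightarrow> complex \<Rightarrow> complex) \<Rightarrow> complex \<Rightarrow> complex \<Rightarrow> complex" where
  "dy f x y = deriv (\<lambda>y'. f x y') y"

definition dt :: "((nat \<Rightarrow> complex) \<Rightarrow> complex) \<Rightarrow> nat \<Rightarrow> (nat \<Rightarrow> complex) \<Rightarrow> complex" where
  "dt u k t = deriv (\<lambda>s. u (t(k := s))) (t k)"

end

theory Submission
  imports Defs
begin

text \<open>
  Since \<open>\<eta>\<^sub>1/(1 - x z)\<close> is \<open>\<eta>\<^sub>1\<close> with \<open>\<epsilon>\<close> replaced by \<open>\<epsilon> + 1\<close>, the convolution
  \<open>\<Sum>\<^sub>i\<^sub>+\<^sub>j\<^sub>=\<^sub>k x\<^sup>i F\<^sub>1\<^sup>j\<close> is \<open>F\<^sub>1\<^sup>k\<close> with parameter \<open>\<epsilon> + 1\<close>. Together with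
  \<open>\<partial>\<^sub>y F\<^sub>1\<^sup>k\<^sup>+\<^sup>1 = F\<^sub>1\<^sup>k\<close> and \<open>\<partial>\<^sub>x F\<^sub>1\<^sup>k\<^sup>+\<^sup>1 = \<epsilon> F\<^sub>1\<^sup>k(\<epsilon> + 1)\<close> this shows that every
  \<open>\<Phi>\<^sub>1\<close> satisfies the same equation \<open>x \<Phi>\<^sub>x\<^sub>y = \<Phi>\<^sub>x - \<epsilon> \<Phi>\<^sub>y\<close> as \<open>\<eta>\<^sub>1\<close>, so the mixed
  partial vanishes at a critical point with \<open>u\<^sub>1 \<noteq> 0\<close>. As \<open>\<Phi>\<^sub>1\<close> is affine in \<open>t\<^sub>k\<close> with
  slope \<open>F\<^sub>1\<^sup>k\<^sup>+\<^sup>1\<close>, differentiating \<open>\<Phi>\<^sub>x = \<Phi>\<^sub>y = 0\<close> along \<open>t\<^sub>k\<close> gives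
  \<open>\<Phi>\<^sub>x\<^sub>x \<partial>\<^sub>k u\<^sub>1 = -\<epsilon> F\<^sub>1\<^sup>k(\<epsilon> + 1)\<close> and \<open>\<Phi>\<^sub>y\<^sub>y \<partial>\<^sub>k u\<^sub>2 = -F\<^sub>1\<^sup>k\<close>; dividing by the
  case \<open>k = 0\<close> yields \<open>\<lambda>\<^sub>1\<^sup>k\<close> and \<open>\<lambda>\<^sub>2\<^sup>k\<close>.
\<close>

lemma has_field_derivative_power:
  fixes x :: "'a::real_normed_field"
  shows "((\<lambda>x. x ^ n) has_field_derivative of_nat n * x ^ (n - 1)) (at x)"
  using DERIV_power[OF DERIV_ident, of n x UNIV] by simp

text \<open>Joint differentiability only provides a real-linear derivative; complex
  differentiability in each variable is what makes it complex-linear.\<close>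

lemma has_field_derivative_compose_partials:
  fixes f :: "complex \<Rightarrow> complex \<Rightarrow> complex"
  assumes f: "(\<lambda>p. f (fst p) (snd p)) differentiable at (a s, b s)"
    and fx: "(\<lambda>x. f x (b s)) field_differentiable at (a s)"
    and fy: "(\<lambda>y. f (a s) y) field_differentiable at (b s)"
    and a: "(a has_field_derivative a') (at s)" and b: "(b has_field_derivative b') (at s)"
  shows "((\<lambda>s. f (a s) (b s)) has_field_derivative dx f (a s) (b s) * a' + dy f (a s) (b s) * b') (at s)"
proof -
  obtain D where D: "((\<lambda>p. f (fst p) (snd p)) has_derivative D) (at (a s, b s))"
    using f unfolding differentiable_def by blast
  have "((\<lambda>x. f x (b s)) has_derivative (\<lambda>h. D (h, 0))) (at (a s))"
    using has_derivative_compose[of "\<lambda>x. (x, b s)" "\<lambda>h. (h, 0)", OF _ D]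
    by (simp add: has_derivative_Pair)
  moreover have "((\<lambda>x. f x (b s)) has_derivative (*) (dx f (a s) (b s))) (at (a s))"
    using fx unfolding dx_def by (simp add: DERIV_deriv_iff_field_differentiable flip: has_field_derivative_def)
  ultimately have "(\<lambda>h. D (h, 0)) = (*) (dx f (a s) (b s))"
    by (rule has_derivative_unique)
  then have Dx: "D (h, 0) = dx f (a s) (b s) * h" for h
    by (rule fun_cong)
  have "((\<lambda>y. f (a s) y) has_derivative (\<lambda>h. D (0, h))) (at (b s))"
    using has_derivative_compose[of "\<lambda>y. (a s, y)" "\<lambda>h. (0, h)", OF _ D]
    by (simp add: has_derivative_Pair)
  moreover have "((\<lambda>y. f (a s) y) has_derivative (*) (dy f (a s) (b s))) (at (b s))"
    using fy unfolding dy_def by (simp add: DERIV_deriv_iff_field_differentiable flip: has_field_derivative_def)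
  ultimately have "(\<lambda>h. D (0, h)) = (*) (dy f (a s) (b s))"
    by (rule has_derivative_unique)
  then have Dy: "D (0, h) = dy f (a s) (b s) * h" for h
    by (rule fun_cong)
  have "D (u, v) = D (u, 0) + D (0, v)" for u v
    using linear_add[OF has_derivative_linear[OF D], of "(u, 0)" "(0, v)"] by simp
  then have D_eq: "(\<lambda>h. D (a' * h, b' * h)) = (*) (dx f (a s) (b s) * a' + dy f (a s) (b s) * b')"
    by (auto simp: Dx Dy algebra_simps)
  have "((\<lambda>s. (a s, b s)) has_derivative (\<lambda>h. (a' * h, b' * h))) (at s)"
    using a b unfolding has_field_derivative_def by (intro has_derivative_Pair)
  from has_derivative_compose[OF this D] show ?thesis
    unfolding has_field_derivative_def D_eq by simp
qed

lemma implicit_derivative_relation: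
  fixes f g :: "complex \<Rightarrow> complex \<Rightarrow> complex"
  assumes f: "(\<lambda>p. f (fst p) (snd p)) differentiable at (a s0, b s0)"
    and fx: "(\<lambda>x. f x (b s0)) field_differentiable at (a s0)"
    and fy: "(\<lambda>y. f (a s0) y) field_differentiable at (b s0)"
    and g: "isCont (\<lambda>p. g (fst p) (snd p)) (a s0, b s0)"
    and a: "(a has_field_derivative a') (at s0)" and b: "(b has_field_derivative b') (at s0)"
    and V: "open V" "s0 \<in> V"
    and zero: "\<And>s. s \<in> V \<Longrightarrow> f (a s) (b s) + (s - s0) * g (a s) (b s) = 0"
  shows "dx f (a s0) (b s0) * a' + dy f (a s0) (b s0) * b' + g (a s0) (b s0) = 0"
proof -
  have "isCont (\<lambda>s. g (a s) (b s)) s0"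
    using isCont_o2[where f = "\<lambda>s. (a s, b s)" and g = "\<lambda>p. g (fst p) (snd p)"] g a b
    by (simp add: DERIV_isCont isCont_Pair)
  \<comment> \<open>Caratheodory: continuity of the cofactor suffices, no differentiability of \<open>g\<close> is needed.\<close>
  then have "((\<lambda>s. (s - s0) * g (a s) (b s)) has_field_derivative g (a s0) (b s0)) (at s0)"
    unfolding CARAT_DERIV by (intro exI[of _ "\<lambda>s. g (a s) (b s)"]) (simp add: mult.commute)
  with has_field_derivative_compose_partials[OF f fx fy a b]
  have "((\<lambda>s. f (a s) (b s) + (s - s0) * g (a s) (b s)) has_field_derivative
      dx f (a s0) (b s0) * a' + dy f (a s0) (b s0) * b' + g (a s0) (b s0)) (at s0)"
    by (rule DERIV_add)
  moreover have "((\<lambda>s. f (a s) (b s) + (s - s0) * g (a s) (b s)) has_field_derivative 0) (at s0)"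
    by (rule has_field_derivative_transform_within_open[OF DERIV_const[where k = 0] V]) (simp add: zero)
  ultimately show ?thesis
    by (rule DERIV_unique)
qed

lemma open_fun_upd_preimage: "open U \<Longrightarrow> open {s. t(k := s) \<in> U}"
  for U :: "('a \<Rightarrow> 'b::topological_space) set"
proof -
  assume "open U"
  moreover have "continuous_on UNIV (\<lambda>s. t(k := s))"
  proof (rule continuous_on_coordinatewise_then_product)
    fix i
    show "continuous_on UNIV (\<lambda>s. (t(k := s)) i)"
      by (cases "i = k") (simp_all add: continuous_on_const continuous_on_id)
  qed
  ultimately show ?thesis
    using open_vimage by (simp add: vimage_def)
qed

lemma sum_fun_upd_mult:
  fixes g :: "'a \<Rightarrow> 'b::comm_ring"
  assumes "finite A" "k \<in> A"
  shows "(\<Sum>j\<in>A. (t(k := s)) j * g j) = (\<Sum>j\<in>A. t j * g j) + (s - t k) * g k"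
proof -
  have "(\<Sum>j\<in>A. (t(k := s)) j * g j) = s * g k + (\<Sum>j\<in>A - {k}. t j * g j)"
    using assms by (subst sum.remove[of A k]) auto
  moreover have "(\<Sum>j\<in>A. t j * g j) = t k * g k + (\<Sum>j\<in>A - {k}. t j * g j)"
    using assms by (subst sum.remove[of A k]) auto
  ultimately show ?thesis
    by (simp add: algebra_simps)
qed

lemma pochhammer_plus_one_Suc_diff:
  fixes a :: "'a::comm_ring_1"
  shows "pochhammer (a + 1) (Suc n) - pochhammer a (Suc n) = of_nat (Suc n) * pochhammer (a + 1) n"
  by (simp only: pochhammer_rec[of a] pochhammer_Suc[of "a + 1"]) (simp add: algebra_simps)

lemma F1_0 [simp]: "F1 e 0 x y = 1"
  by (simp add: F1_def)

lemma F1_1: "F1 e 1 x y = e * x + y"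
  by (simp add: F1_def)

lemma F1_plus_one_Suc: "F1 (e + 1) (Suc k) x y = F1 e (Suc k) x y + x * F1 (e + 1) k x y"
proof -
  have "F1 (e + 1) (Suc k) x y - F1 e (Suc k) x y =
      (\<Sum>i\<le>Suc k. (pochhammer (e + 1) i - pochhammer e i) / (fact i * fact (Suc k - i))
                    * x ^ i * y ^ (Suc k - i))"
    unfolding F1_def by (simp add: sum_subtractf diff_divide_distrib algebra_simps)
  also have "\<dots> = (\<Sum>i\<le>k. (pochhammer (e + 1) (Suc i) - pochhammer e (Suc i))
                    / (fact (Suc i) * fact (k - i)) * x ^ Suc i * y ^ (k - i))"
    by (subst sum.atMost_Suc_shift) simp
  also have "\<dots> = (\<Sum>i\<le>k. x * (pochhammer (e + 1) i / (fact i * fact (k - i)) * x ^ i * y ^ (k - i)))"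
    by (intro sum.cong refl) (simp only: pochhammer_plus_one_Suc_diff, simp add: field_simps del: of_nat_Suc)
  also have "\<dots> = x * F1 (e + 1) k x y"
    by (simp add: F1_def sum_distrib_left)
  finally show ?thesis
    by (simp add: algebra_simps)
qed

lemma F1_plus_one_eq_sum: "F1 (e + 1) k x y = (\<Sum>i\<le>k. x ^ i * F1 e (k - i) x y)"
proof (induction k)
  case (Suc k)
  have "(\<Sum>i\<le>Suc k. x ^ i * F1 e (Suc k - i) x y) = F1 e (Suc k) x y + x * (\<Sum>i\<le>k. x ^ i * F1 e (k - i) x y)"
    by (subst sum.atMost_Suc_shift) (simp add: sum_distrib_left mult.assoc)
  then show ?case
    using Suc.IH by (simp add: F1_plus_one_Suc)
qed simp

lemma has_field_derivative_F1_y: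
  "((\<lambda>y. F1 e (Suc k) x y) has_field_derivative F1 e k x y) (at y)"
proof -
  have "((\<lambda>y. F1 e (Suc k) x y) has_field_derivative
      (\<Sum>i\<le>Suc k. pochhammer e i / (fact i * fact (Suc k - i)) * x ^ i
                   * (of_nat (Suc k - i) * y ^ (Suc k - i - 1)))) (at y)"
    unfolding F1_def by (intro DERIV_sum DERIV_cmult has_field_derivative_power)
  also have "(\<Sum>i\<le>Suc k. pochhammer e i / (fact i * fact (Suc k - i)) * x ^ i
                   * (of_nat (Suc k - i) * y ^ (Suc k - i - 1)))
      = (\<Sum>i\<le>k. pochhammer e i / (fact i * fact (Suc k - i)) * x ^ i
                   * (of_nat (Suc k - i) * y ^ (Suc k - i - 1)))"
    by (simp add: sum.atMost_Suc)
  also have "\<dots> = F1 e k x y"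
    unfolding F1_def by (rule sum.cong[OF refl]) (simp add: Suc_diff_le field_simps del: of_nat_Suc)
  finally show ?thesis .
qed

lemma has_field_derivative_F1_x:
  "((\<lambda>x. F1 e (Suc k) x y) has_field_derivative e * F1 (e + 1) k x y) (at x)"
proof -
  have "((\<lambda>x. F1 e (Suc k) x y) has_field_derivative
      (\<Sum>i\<le>Suc k. pochhammer e i / (fact i * fact (Suc k - i))
                   * (of_nat i * x ^ (i - 1)) * y ^ (Suc k - i))) (at x)"
    unfolding F1_def by (intro DERIV_sum DERIV_cmult DERIV_cmult_right has_field_derivative_power)
  also have "(\<Sum>i\<le>Suc k. pochhammer e i / (fact i * fact (Suc k - i))
                   * (of_nat i * x ^ (i - 1)) * y ^ (Suc k - i))
      = (\<Sum>i\<le>k. pochhammer e (Suc i) / (fact (Suc i) * fact (k - i))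
                   * (of_nat (Suc i) * x ^ i) * y ^ (k - i))"
    by (subst sum.atMost_Suc_shift) simp
  also have "\<dots> = e * F1 (e + 1) k x y"
    unfolding F1_def sum_distrib_left
    by (rule sum.cong[OF refl]) (simp add: pochhammer_rec field_simps del: of_nat_Suc)
  finally show ?thesis .
qed

lemma F1_differentiable: "(\<lambda>p. F1 e k (fst p) (snd p)) differentiable at p"
  unfolding F1_def differentiable_def
  by (rule exI) (rule has_derivative_sum has_derivative_mult has_derivative_power has_derivative_const
      has_derivative_fst has_derivative_snd has_derivative_ident)+

lemma F1_isCont: "isCont (\<lambda>p. F1 e k (fst p) (snd p)) p"
  using differentiable_imp_continuous_within[OF F1_differentiable] .

lemma F1_field_differentiable_x: "(\<lambda>x. F1 e k x y) field_differentiable at x"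
  unfolding F1_def by (intro derivative_intros)

lemma F1_field_differentiable_y: "(\<lambda>y. F1 e k x y) field_differentiable at y"
  unfolding F1_def by (intro derivative_intros)

lemma has_field_derivative_F1_dx: "((\<lambda>x. F1 e k x y) has_field_derivative dx (F1 e k) x y) (at x)"
  unfolding dx_def using F1_field_differentiable_x by (simp add: DERIV_deriv_iff_field_differentiable)

lemma has_field_derivative_F1_dy: "((\<lambda>y. F1 e k x y) has_field_derivative dy (F1 e k) x y) (at y)"
  unfolding dy_def using F1_field_differentiable_y by (simp add: DERIV_deriv_iff_field_differentiable)

lemma dy_F1_Suc: "dy (F1 e (Suc k)) x y = F1 e k x y"
  unfolding dy_def by (rule DERIV_imp_deriv[OF has_field_derivative_F1_y])

lemma dx_F1_Suc: "dx (F1 e (Suc k)) x y = e * F1 (e + 1) k x y"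
  unfolding dx_def by (rule DERIV_imp_deriv[OF has_field_derivative_F1_x])

lemma dx_F1_eq_dy_F1_plus_one: "dx (F1 e k) x y = e * dy (F1 (e + 1) k) x y"
  by (cases k) (simp_all add: dx_def dy_def dx_F1_Suc[unfolded dx_def] dy_F1_Suc[unfolded dy_def])

lemma x_mul_dx_F1: "x * dx (F1 e k) x y = e * (F1 (e + 1) k x y - F1 e k x y)"
  by (cases k) (simp_all add: dx_def dx_F1_Suc[unfolded dx_def] F1_plus_one_Suc ring_distribs)

lemma dx_Phi1: "dx (Phi1 e m t) x y = e * (\<Sum>k\<le>m. t k * F1 (e + 1) k x y)"
proof -
  have "((\<lambda>x. Phi1 e m t x y) has_field_derivative (\<Sum>k\<le>m. t k * (e * F1 (e + 1) k x y))) (at x)"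
    unfolding Phi1_def Suc_eq_plus1[symmetric] by (intro DERIV_sum DERIV_cmult has_field_derivative_F1_x)
  then show ?thesis
    by (simp add: dx_def DERIV_imp_deriv sum_distrib_left mult.left_commute)
qed

lemma dy_Phi1: "dy (Phi1 e m t) x y = (\<Sum>k\<le>m. t k * F1 e k x y)"
proof -
  have "((\<lambda>y. Phi1 e m t x y) has_field_derivative (\<Sum>k\<le>m. t k * F1 e k x y)) (at y)"
    unfolding Phi1_def Suc_eq_plus1[symmetric] by (intro DERIV_sum DERIV_cmult has_field_derivative_F1_y)
  then show ?thesis
    by (simp add: dy_def DERIV_imp_deriv)
qed

lemma dy_dx_Phi1: "dy (dx (Phi1 e m t)) x y = (\<Sum>k\<le>m. t k * dx (F1 e k) x y)"
proof -
  have "((\<lambda>y. dx (Phi1 e m t) x y) has_field_derivative e * (\<Sum>k\<le>m. t k * dy (F1 (e + 1) k) x y)) (at y)"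
    unfolding dx_Phi1 by (intro DERIV_cmult DERIV_sum has_field_derivative_F1_dy)
  then show ?thesis
    by (simp add: dy_def DERIV_imp_deriv dx_F1_eq_dy_F1_plus_one sum_distrib_left mult.left_commute)
qed

lemma dx_dy_Phi1: "dx (dy (Phi1 e m t)) x y = (\<Sum>k\<le>m. t k * dx (F1 e k) x y)"
proof -
  have "((\<lambda>x. dy (Phi1 e m t) x y) has_field_derivative (\<Sum>k\<le>m. t k * dx (F1 e k) x y)) (at x)"
    unfolding dy_Phi1 by (intro DERIV_sum DERIV_cmult has_field_derivative_F1_dx)
  then show ?thesis
    by (simp add: dx_def DERIV_imp_deriv)
qed

lemma Phi1_pde: "x * dx (dy (Phi1 e m t)) x y = dx (Phi1 e m t) x y - e * dy (Phi1 e m t) x y"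
proof -
  have "x * dx (dy (Phi1 e m t)) x y = (\<Sum>k\<le>m. t k * (x * dx (F1 e k) x y))"
    by (simp add: dx_dy_Phi1 sum_distrib_left mult.left_commute)
  also have "\<dots> = dx (Phi1 e m t) x y - e * dy (Phi1 e m t) x y"
    by (simp add: x_mul_dx_F1 dx_Phi1 dy_Phi1 sum_distrib_left sum_subtractf algebra_simps)
  finally show ?thesis .
qed

lemma dx_Phi1_fun_upd:
  "k \<le> m \<Longrightarrow> dx (Phi1 e m (t(k := s))) x y = dx (Phi1 e m t) x y + (s - t k) * dx (F1 e (Suc k)) x y"
  by (simp add: dx_Phi1 dx_F1_Suc sum_fun_upd_mult algebra_simps del: fun_upd_apply)

lemma dy_Phi1_fun_upd:
  "k \<le> m \<Longrightarrow> dy (Phi1 e m (t(k := s))) x y = dy (Phi1 e m t) x y + (s - t k) * dy (F1 e (Suc k)) x y"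
  by (simp add: dy_Phi1 dy_F1_Suc sum_fun_upd_mult del: fun_upd_apply)

lemma Phi1_partials_differentiable:
  "(\<lambda>p. dx (Phi1 e m t) (fst p) (snd p)) differentiable at p"
  "(\<lambda>p. dy (Phi1 e m t) (fst p) (snd p)) differentiable at p"
  unfolding dx_Phi1 dy_Phi1
  by (intro differentiable_mult differentiable_sum differentiable_const ballI F1_differentiable finite_atMost)+

lemma Phi1_partials_field_differentiable:
  "(\<lambda>x. dx (Phi1 e m t) x y) field_differentiable at x"
  "(\<lambda>y. dx (Phi1 e m t) x y) field_differentiable at y"
  "(\<lambda>x. dy (Phi1 e m t) x y) field_differentiable at x"
  "(\<lambda>y. dy (Phi1 e m t) x y) field_differentiable at y"
  unfolding dx_Phi1 dy_Phi1
  by (intro field_differentiable_mult field_differentiable_sum field_differentiable_const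
      F1_field_differentiable_x F1_field_differentiable_y)+

lemma Phi1_critical_point_deriv_relations:
  assumes U: "open U" "t \<in> U" and k: "k \<le> m"
    and u1: "(\<lambda>s. u1 (t(k := s))) field_differentiable at (t k)"
    and u2: "(\<lambda>s. u2 (t(k := s))) field_differentiable at (t k)"
    and crit: "\<forall>t\<in>U. dx (Phi1 e m t) (u1 t) (u2 t) = 0 \<and> dy (Phi1 e m t) (u1 t) (u2 t) = 0"
    and "u1 t \<noteq> 0"
  shows "dx (dx (Phi1 e m t)) (u1 t) (u2 t) * dt u1 k t + e * F1 (e + 1) k (u1 t) (u2 t) = 0"
    and "dy (dy (Phi1 e m t)) (u1 t) (u2 t) * dt u2 k t + F1 e k (u1 t) (u2 t) = 0"
proof -
  define a where "a = (\<lambda>s. u1 (t(k := s)))"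
  define b where "b = (\<lambda>s. u2 (t(k := s)))"
  define V where "V = {s. t(k := s) \<in> U}"
  have at_tk: "a (t k) = u1 t" "b (t k) = u2 t"
    by (simp_all add: a_def b_def)
  have a: "(a has_field_derivative dt u1 k t) (at (t k))" and b: "(b has_field_derivative dt u2 k t) (at (t k))"
    using u1 u2 by (simp_all add: a_def b_def dt_def DERIV_deriv_iff_field_differentiable)
  have V: "open V" "t k \<in> V"
    using U by (simp_all add: V_def open_fun_upd_preimage)
  have mixed: "dy (dx (Phi1 e m t)) (u1 t) (u2 t) = 0" "dx (dy (Phi1 e m t)) (u1 t) (u2 t) = 0"
    using Phi1_pde[of "u1 t" e m t "u2 t"] crit U(2) \<open>u1 t \<noteq> 0\<close> by (simp_all add: dy_dx_Phi1 dx_dy_Phi1)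
  have crit_line: "dx (Phi1 e m t) (a s) (b s) + (s - t k) * dx (F1 e (Suc k)) (a s) (b s) = 0"
    "dy (Phi1 e m t) (a s) (b s) + (s - t k) * dy (F1 e (Suc k)) (a s) (b s) = 0" if "s \<in> V" for s
    using crit that k by (simp_all add: V_def a_def b_def flip: dx_Phi1_fun_upd dy_Phi1_fun_upd)
  have "dx (dx (Phi1 e m t)) (a (t k)) (b (t k)) * dt u1 k t + dy (dx (Phi1 e m t)) (a (t k)) (b (t k)) * dt u2 k t
      + dx (F1 e (Suc k)) (a (t k)) (b (t k)) = 0"
    by (rule implicit_derivative_relation[OF Phi1_partials_differentiable(1)
          Phi1_partials_field_differentiable(1,2) _ a b V crit_line(1)])
      (simp add: dx_F1_Suc F1_isCont)
  then show "dx (dx (Phi1 e m t)) (u1 t) (u2 t) * dt u1 k t + e * F1 (e + 1) k (u1 t) (u2 t) = 0"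
    by (simp add: at_tk mixed dx_F1_Suc)
  have "dx (dy (Phi1 e m t)) (a (t k)) (b (t k)) * dt u1 k t + dy (dy (Phi1 e m t)) (a (t k)) (b (t k)) * dt u2 k t
      + dy (F1 e (Suc k)) (a (t k)) (b (t k)) = 0"
    by (rule implicit_derivative_relation[OF Phi1_partials_differentiable(2)
          Phi1_partials_field_differentiable(3,4) _ a b V crit_line(2)])
      (simp add: dy_F1_Suc F1_isCont)
  then show "dy (dy (Phi1 e m t)) (u1 t) (u2 t) * dt u2 k t + F1 e k (u1 t) (u2 t) = 0"
    by (simp add: at_tk mixed dy_F1_Suc)
qed

lemma Phi1_critical_point_param_derivs:
  assumes U: "open U" "t \<in> U" and k: "k \<le> m"
    and u1: "\<And>j. j \<le> m \<Longrightarrow> (\<lambda>s. u1 (t(j := s))) field_differentiable at (t j)"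
    and u2: "\<And>j. j \<le> m \<Longrightarrow> (\<lambda>s. u2 (t(j := s))) field_differentiable at (t j)"
    and crit: "\<forall>t\<in>U. dx (Phi1 e m t) (u1 t) (u2 t) = 0 \<and> dy (Phi1 e m t) (u1 t) (u2 t) = 0"
    and nondeg: "u1 t \<noteq> 0" "dx (dx (Phi1 e m t)) (u1 t) (u2 t) \<noteq> 0" "dy (dy (Phi1 e m t)) (u1 t) (u2 t) \<noteq> 0"
  shows "dt u1 k t = F1 (e + 1) k (u1 t) (u2 t) * dt u1 0 t"
    and "dt u2 k t = F1 e k (u1 t) (u2 t) * dt u2 0 t"
proof -
  have "j \<le> m \<Longrightarrow> dx (dx (Phi1 e m t)) (u1 t) (u2 t) * dt u1 j t + e * F1 (e + 1) j (u1 t) (u2 t) = 0"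
    and "j \<le> m \<Longrightarrow> dy (dy (Phi1 e m t)) (u1 t) (u2 t) * dt u2 j t + F1 e j (u1 t) (u2 t) = 0" for j
    using Phi1_critical_point_deriv_relations[OF U _ u1 u2 crit nondeg(1), of j] by simp_all
  from this[of 0] this[OF k] nondeg(2,3) show
    "dt u1 k t = F1 (e + 1) k (u1 t) (u2 t) * dt u1 0 t"
    "dt u2 k t = F1 e k (u1 t) (u2 t) * dt u2 0 t"
    by simp_all algebra+
qed

lemma eta1_pde:
  assumes "1 - x * z \<notin> \<real>\<^sub>\<le>\<^sub>0"
  shows "x * dx (dy (\<lambda>x y. eta1 e x y z)) x y = dx (\<lambda>x y. eta1 e x y z) x y - e * dy (\<lambda>x y. eta1 e x y z) x y"
proof -
  have dy_eta1: "dy (\<lambda>x y. eta1 e x y z) x' y' = z * eta1 e x' y' z" for x' y'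
  proof -
    have "((\<lambda>y. eta1 e x' y z) has_field_derivative z * eta1 e x' y' z) (at y')"
      unfolding eta1_def by (auto intro!: derivative_eq_intros)
    then show ?thesis
      unfolding dy_def by (rule DERIV_imp_deriv)
  qed
  have "((\<lambda>x. eta1 e x y z) has_field_derivative e * z * (1 - x * z) powr (- e - 1) * exp (y * z)) (at x)"
    unfolding eta1_def using assms by (auto intro!: derivative_eq_intros)
  then have dx_eta1: "dx (\<lambda>x y. eta1 e x y z) x y = e * z * (1 - x * z) powr (- e - 1) * exp (y * z)"
    and dx_dy_eta1: "dx (dy (\<lambda>x y. eta1 e x y z)) x y = z * (e * z * (1 - x * z) powr (- e - 1) * exp (y * z))"
    unfolding dx_def dy_eta1 by (auto intro: DERIV_imp_deriv DERIV_cmult)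
  have powr_split: "(1 - x * z) powr (- e) = (1 - x * z) powr (- e - 1) * (1 - x * z)"
    using powr_add[of "1 - x * z" "- e - 1" 1] by simp
  show ?thesis
    unfolding dx_eta1 dx_dy_eta1 dy_eta1 unfolding eta1_def powr_split by (simp add: algebra_simps)
qed

theorem mainTheorem8:
  fixes eps :: complex
  assumes eps: "eps \<noteq> 0"
  shows
   \<comment> \<open>(a)\<close>
   "(\<forall>x y z. 1 - x * z \<notin> \<real>\<^sub>\<le>\<^sub>0 \<longrightarrow>
        x * dx (dy (\<lambda>x y. eta1 eps x y z)) x y
          = dx (\<lambda>x y. eta1 eps x y z) x y - eps * dy (\<lambda>x y. eta1 eps x y z) x y)
    \<and> (\<forall>k x y. dy (F1 eps (k + 1)) x y = F1 eps k x y)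
    \<and> (\<forall>k x y. dx (F1 eps (k + 1)) x y / eps = (\<Sum>i\<le>k. x ^ i * F1 eps (k - i) x y))
   \<comment> \<open>(b)\<close>
    \<and> (\<forall>(m::nat) (U :: (nat \<Rightarrow> complex) set) (u1 :: (nat \<Rightarrow> complex) \<Rightarrow> complex) u2.
         m \<ge> 1 \<and> open U
         \<and> (\<forall>k\<le>m. \<forall>t\<in>U. (\<lambda>s. u1 (t(k := s))) field_differentiable at (t k)
                        \<and> (\<lambda>s. u2 (t(k := s))) field_differentiable at (t k))
         \<and> (\<forall>k\<le>m. continuous_on U (dt u1 k) \<and> continuous_on U (dt u2 k))
         \<and> (\<forall>t\<in>U. dx (Phi1 eps m t) (u1 t) (u2 t) = 0 \<and> dy (Phi1 eps m t) (u1 t) (u2 t) = 0)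
       \<longrightarrow> (\<forall>t\<in>U. u1 t \<noteq> 0
               \<and> dx (dx (Phi1 eps m t)) (u1 t) (u2 t) \<noteq> 0
               \<and> dy (dy (Phi1 eps m t)) (u1 t) (u2 t) \<noteq> 0
             \<longrightarrow> (\<forall>k\<in>{1..m}.
                   dt u1 k t = (\<Sum>i\<le>k. u1 t ^ i * F1 eps (k - i) (u1 t) (u2 t)) * dt u1 0 t
                 \<and> dt u2 k t = F1 eps k (u1 t) (u2 t) * dt u2 0 t)
               \<and> (\<Sum>i\<le>1. u1 t ^ i * F1 eps (1 - i) (u1 t) (u2 t)) = (1 + eps) * u1 t + u2 t
               \<and> F1 eps 1 (u1 t) (u2 t) = eps * u1 t + u2 t))"
proof (intro conjI allI impI ballI)
  show "x * dx (dy (\<lambda>x y. eta1 eps x y z)) x y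
      = dx (\<lambda>x y. eta1 eps x y z) x y - eps * dy (\<lambda>x y. eta1 eps x y z) x y"
    if "1 - x * z \<notin> \<real>\<^sub>\<le>\<^sub>0" for x y z
    using that by (rule eta1_pde)
  show "dy (F1 eps (k + 1)) x y = F1 eps k x y" for k x y
    by (simp add: dy_F1_Suc)
  show "dx (F1 eps (k + 1)) x y / eps = (\<Sum>i\<le>k. x ^ i * F1 eps (k - i) x y)" for k x y
    using eps by (simp add: dx_F1_Suc F1_plus_one_eq_sum)
  show "(\<Sum>i\<le>1. x ^ i * F1 eps (1 - i) x y) = (1 + eps) * x + y" for x y
    unfolding F1_plus_one_eq_sum[symmetric] F1_1 by (simp add: algebra_simps)
  show "F1 eps 1 x y = eps * x + y" for x y
    by (rule F1_1)
qed (auto simp flip: F1_plus_one_eq_sum intro!: Phi1_critical_point_param_derivs)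

end
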